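(* Let $H$ be a CAT($-1$) space and let $\gamma_1,\gamma_2:[0,\infty)\to H$ be unit speed geodesic rays with $\gamma_1(\infty)=\gamma_2(\infty)=\zeta\in\partial H$. Set $d=d(\gamma_1(0),\gamma_2(0))$ and $\rho=\rho_\zeta(\gamma_1(0),\gamma_2(0))$. Then for all $s,t\geq 0$, $$d(\gamma_1(s),\gamma_2(t))\leq\cosh^{-1}\left(\frac{\cosh(d)-\cosh(\rho)}{e^{t+s}}+\cosh(\rho+s-t)\right).$$ Moreover, if $\rho=0$ and $d>0$, then for all $t\geq0$, $$d(\gamma_1(t),\gamma_2(t))\leq 2\sinh^{-1}\left(\sinh(d/2)e^{-t}\right)\leq\begin{cases} d-\frac{2}{d}\left(e^{-d}+d-1\right)t & 0\leq t\leq\frac d2,\\ 2\sinh\left(\frac d2\right)e^{-t} & t>\frac d2.\end{cases}$$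
   Context: $\partial H$ is the geodesic boundary of $H$. The Busemann function is $\rho_\zeta(p,q)=\lim_{z\to\zeta}(d(q,z)-d(p,z))$. *)

theory Defs
  imports "HOL-Analysis.Analysis"
begin

text \<open>The hyperbolic plane (model space of curvature -1), upper half-plane model.\<close>

definition H2dist :: "complex \<Rightarrow> complex \<Rightarrow> real" where
  "H2dist z w = arcosh (1 + (cmod (z - w))\<^sup>2 / (2 * Im z * Im w))"

definition geodesic_segment :: "(real \<Rightarrow> 'a::metric_space) \<Rightarrow> 'a \<Rightarrow> 'a \<Rightarrow> bool" where
  "geodesic_segment c x y \<longleftrightarrow> c 0 = x \<and> c (dist x y) = y \<and>
     (\<forall>s\<in>{0..dist x y}. \<forall>t\<in>{0..dist x y}. dist (c s) (c t) = \<bar>s - t\<bar>)"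

definition geodesic_space :: "'a::metric_space itself \<Rightarrow> bool" where
  "geodesic_space _ \<longleftrightarrow> (\<forall>x y::'a. \<exists>c. geodesic_segment c x y)"

text \<open>Pairs (point on the side c from x to y, its comparison point on the side from a to b of
  a comparison triangle in the hyperbolic plane).\<close>

definition comparison_pairs ::
  "(real \<Rightarrow> 'a::metric_space) \<Rightarrow> 'a \<Rightarrow> 'a \<Rightarrow> complex \<Rightarrow> complex \<Rightarrow> ('a \<times> complex) set" where
  "comparison_pairs c x y a b =
     {(c s, pb) | s pb. s \<in> {0..dist x y} \<and> Im pb > 0 \<and>
                        H2dist a pb = s \<and> H2dist pb b = dist x y - s}"

definition CAT_minus1 :: "'a::metric_space itself \<Rightarrow> bool" where
  "CAT_minus1 T \<longleftrightarrow> geodesic_space T \<and>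
     (\<forall>(x::'a) y z cxy cyz czx a b c.
        geodesic_segment cxy x y \<and> geodesic_segment cyz y z \<and> geodesic_segment czx z x \<and>
        Im a > 0 \<and> Im b > 0 \<and> Im c > 0 \<and>
        H2dist a b = dist x y \<and> H2dist b c = dist y z \<and> H2dist c a = dist z x \<longrightarrow>
        (let P = comparison_pairs cxy x y a b \<union> comparison_pairs cyz y z b c
                 \<union> comparison_pairs czx z x c a
         in \<forall>(p, pb)\<in>P. \<forall>(q, qb)\<in>P. dist p q \<le> H2dist pb qb))"

definition geodesic_ray :: "(real \<Rightarrow> 'a::metric_space) \<Rightarrow> bool" where
  "geodesic_ray g \<longleftrightarrow> (\<forall>s\<ge>0. \<forall>t\<ge>0. dist (g s) (g t) = \<bar>s - t\<bar>)"

text \<open>Two rays define the same point of the geodesic boundary iff they are asymptotic.\<close>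

definition same_endpoint :: "(real \<Rightarrow> 'a::metric_space) \<Rightarrow> (real \<Rightarrow> 'a) \<Rightarrow> bool" where
  "same_endpoint g1 g2 \<longleftrightarrow> (\<exists>B. \<forall>t\<ge>0. dist (g1 t) (g2 t) \<le> B)"

text \<open>Busemann function rho_zeta(p,q) = lim_{z -> zeta} (d(q,z) - d(p,z)), where zeta is the
  endpoint of the ray g; the limit is taken along the ray.\<close>

definition busemann :: "(real \<Rightarrow> 'a::metric_space) \<Rightarrow> 'a \<Rightarrow> 'a \<Rightarrow> real" where
  "busemann g p q = Lim at_top (\<lambda>t. dist q (g t) - dist p (g t))"

end

theory Submission
  imports Defs "HOL-Real_Asymp.Real_Asymp"
begin

text \<open>Fix \<open>s, t\<close> and let \<open>U \<rightarrow> \<infinity>\<close>. Let \<open>\<sigma>\<^sub>U\<close> be the geodesic from \<open>\<gamma>\<^sub>2(0)\<close> to \<open>\<gamma>\<^sub>1(U)\<close>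
  and \<open>L = d(\<gamma>\<^sub>2(0), \<gamma>\<^sub>1(U))\<close>, so that \<open>L - U \<rightarrow> \<rho>\<close>. Comparison with the hyperbolic triangle with
  vertices \<open>\<gamma>\<^sub>1(0), \<gamma>\<^sub>1(U), \<gamma>\<^sub>2(0)\<close>, taken in the angle form of the CAT(-1) inequality at
  \<open>\<gamma>\<^sub>1(U)\<close>, bounds \<open>cosh d(\<gamma>\<^sub>1(s), \<sigma>\<^sub>U(t))\<close> by an expression in \<open>d, U, L\<close> whose limit is
  the claimed right-hand side, because \<open>sinh(U - s)/sinh U \<rightarrow> e\<^sup>-\<^sup>s\<close>. Comparison at the vertex
  \<open>\<gamma>\<^sub>2(0)\<close> of the triangle \<open>\<gamma>\<^sub>2(0), \<gamma>\<^sub>1(U), \<gamma>\<^sub>2(U)\<close> shows \<open>\<sigma>\<^sub>U(t) \<rightarrow> \<gamma>\<^sub>2(t)\<close>, since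
  \<open>d(\<gamma>\<^sub>1(U), \<gamma>\<^sub>2(U))\<close> stays bounded while \<open>sinh L sinh U \<rightarrow> \<infinity>\<close>.

  For \<open>\<rho> = 0\<close> and \<open>s = t\<close> the bound equals \<open>2 arsinh(sinh(d/2) e\<^sup>-\<^sup>t)\<close>, a convex function of
  \<open>t\<close>: on \<open>[0, d/2]\<close> it lies below its chord, and beyond that \<open>arsinh x \<le> x\<close> suffices.\<close>

text \<open>Geodesic polar coordinates about \<open>\<i>\<close> in the upper half-plane: \<open>H2_polar r \<theta>\<close> lies at
  distance \<open>r\<close> from \<open>\<i>\<close>, on the geodesic leaving \<open>\<i>\<close> at angle \<open>\<theta>\<close> to the upward imaginary axis.\<close>

definition H2_polar :: "real \<Rightarrow> real \<Rightarrow> complex" where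
  "H2_polar r \<theta> =
     Complex (sinh r * sin \<theta> / (cosh r - sinh r * cos \<theta>)) (1 / (cosh r - sinh r * cos \<theta>))"

lemma H2_polar_denom_pos:
  fixes r \<theta> :: real
  shows "cosh r - sinh r * cos \<theta> > 0"
proof -
  have "\<bar>sinh r * cos \<theta>\<bar> \<le> \<bar>sinh r\<bar>"
    by (simp add: abs_mult mult_left_le)
  moreover have "\<bar>sinh r\<bar> < cosh r"
    using sinh_less_cosh_real[of r] sinh_less_cosh_real[of "- r"] by (simp add: abs_less_iff)
  ultimately show ?thesis by linarith
qed

lemma Im_H2_polar_pos: "Im (H2_polar r \<theta>) > 0"
  using H2_polar_denom_pos[of r \<theta>] by (simp add: H2_polar_def)

lemma H2_polar_0: "H2_polar 0 \<theta> = H2_polar 0 0"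
  by (simp add: H2_polar_def)

lemma cosh_H2dist:
  assumes "Im z > 0" "Im w > 0"
  shows "cosh (H2dist z w) = 1 + (cmod (z - w))\<^sup>2 / (2 * Im z * Im w)"
  using assms by (simp add: H2dist_def)

lemma H2dist_nonneg:
  assumes "Im z > 0" "Im w > 0"
  shows "H2dist z w \<ge> 0"
  using assms by (simp add: H2dist_def)

lemma cosh_H2dist_H2_polar:
  "cosh (H2dist (H2_polar r1 \<theta>1) (H2_polar r2 \<theta>2))
     = cosh r1 * cosh r2 - sinh r1 * sinh r2 * cos (\<theta>1 - \<theta>2)"
proof -
  define D1 D2 where "D1 = cosh r1 - sinh r1 * cos \<theta>1" and "D2 = cosh r2 - sinh r2 * cos \<theta>2"
  define X where "X = cosh r1 * cosh r2 - sinh r1 * sinh r2 * cos (\<theta>1 - \<theta>2)"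
  have pos: "D1 > 0" "D2 > 0"
    using H2_polar_denom_pos[of r1 \<theta>1] H2_polar_denom_pos[of r2 \<theta>2]
    by (simp_all add: D1_def D2_def)
  have "H2_polar r1 \<theta>1 = Complex (sinh r1 * sin \<theta>1 / D1) (1 / D1)"
    "H2_polar r2 \<theta>2 = Complex (sinh r2 * sin \<theta>2 / D2) (1 / D2)"
    by (simp_all add: H2_polar_def D1_def D2_def)
  then have "(cmod (H2_polar r1 \<theta>1 - H2_polar r2 \<theta>2))\<^sup>2
      = ((sinh r1 * sin \<theta>1 * D2 - sinh r2 * sin \<theta>2 * D1)\<^sup>2 + (D2 - D1)\<^sup>2) / (D1 * D2)\<^sup>2"
    unfolding cmod_power2 using pos by (simp add: field_simps power2_eq_square)
  also have "\<dots> = 2 * (D1 * D2) * (X - 1) / (D1 * D2)\<^sup>2"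
    unfolding D1_def D2_def X_def cos_diff
    using cosh_square_eq[of r1] cosh_square_eq[of r2] sin_cos_squared_add[of \<theta>1]
      sin_cos_squared_add[of \<theta>2]
    by algebra
  finally have "(cmod (H2_polar r1 \<theta>1 - H2_polar r2 \<theta>2))\<^sup>2 = 2 * (X - 1) / (D1 * D2)"
    using pos by (simp add: power2_eq_square)
  moreover have "2 * Im (H2_polar r1 \<theta>1) * Im (H2_polar r2 \<theta>2) = 2 / (D1 * D2)"
    by (simp add: H2_polar_def D1_def D2_def)
  ultimately show ?thesis
    using pos by (simp add: cosh_H2dist Im_H2_polar_pos X_def) (simp add: field_simps)
qed

lemma H2dist_H2_polar_eq:
  assumes "r \<ge> 0" "cosh r1 * cosh r2 - sinh r1 * sinh r2 * cos (\<theta>1 - \<theta>2) = cosh r"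
  shows "H2dist (H2_polar r1 \<theta>1) (H2_polar r2 \<theta>2) = r"
  using assms cosh_H2dist_H2_polar[of r1 \<theta>1 r2 \<theta>2]
    H2dist_nonneg[OF Im_H2_polar_pos Im_H2_polar_pos]
  by (simp add: abs_of_nonneg)

lemma H2dist_H2_polar_same_angle: "H2dist (H2_polar r1 \<theta>) (H2_polar r2 \<theta>) = \<bar>r1 - r2\<bar>"
  by (rule H2dist_H2_polar_eq) (simp_all add: cosh_diff)

lemma geodesic_segment_reverse:
  assumes "geodesic_segment c y x"
  shows "geodesic_segment (\<lambda>s. c (dist y x - s)) x y"
  using assms unfolding geodesic_segment_def
  by (auto simp: dist_commute abs_minus_commute)

lemma comparison_angle_exists:
  fixes A B C :: real
  assumes "A > 0" "B > 0" "\<bar>A - B\<bar> \<le> C" "C \<le> A + B"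
  obtains \<theta> where "cosh A * cosh B - sinh A * sinh B * cos \<theta> = cosh C"
proof -
  define u where "u = (cosh A * cosh B - cosh C) / (sinh A * sinh B)"
  have sinh_pos: "sinh A * sinh B > 0"
    using assms by simp
  have "cosh (A - B) \<le> cosh C"
    using assms cosh_real_nonneg_le_iff[of "\<bar>A - B\<bar>" C] by simp
  then have "u \<le> 1"
    using sinh_pos by (simp add: u_def divide_le_eq cosh_diff)
  moreover have "cosh C \<le> cosh (A + B)"
    using assms cosh_real_nonneg_le_iff[of C "A + B"] by simp
  then have "-1 \<le> u"
    using sinh_pos by (simp add: u_def le_divide_eq cosh_add)
  ultimately have "cos (arccos u) = u"
    by (intro cos_arccos) auto
  then have "cosh A * cosh B - sinh A * sinh B * cos (arccos u) = cosh C"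
    using assms sinh_pos by (simp add: u_def)
  then show ?thesis
    by (rule that)
qed

text \<open>The angle form of the CAT(-1) inequality: the right-hand side is the hyperbolic law of
  cosines for the comparison points, with the comparison angle at \<open>y\<close> eliminated.\<close>

lemma CAT_minus1_cosh_dist_le:
  fixes c1 c2 :: "real \<Rightarrow> 'a::metric_space"
  assumes cat: "CAT_minus1 TYPE('a)"
    and c1: "geodesic_segment c1 y x" and c2: "geodesic_segment c2 y z"
    and pos: "dist y x > 0" "dist y z > 0"
    and r1: "0 \<le> r1" "r1 \<le> dist y x" and r2: "0 \<le> r2" "r2 \<le> dist y z"
  shows "cosh (dist (c1 r1) (c2 r2)) \<le> cosh (r1 - r2) + sinh r1 * sinh r2 *
           (cosh (dist x z) - cosh (dist y x - dist y z)) / (sinh (dist y x) * sinh (dist y z))"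
proof -
  define A B C where "A = dist y x" and "B = dist y z" and "C = dist x z"
  have "\<bar>A - B\<bar> \<le> C" "C \<le> A + B"
    unfolding A_def B_def C_def using dist_triangle3[of y x z] dist_triangle3[of y z x]
      dist_triangle3[of x z y] by (auto simp: dist_commute)
  then obtain \<theta> where \<theta>: "cosh A * cosh B - sinh A * sinh B * cos \<theta> = cosh C"
    using comparison_angle_exists pos unfolding A_def B_def C_def by blast
  obtain czx where czx: "geodesic_segment czx z x"
    using cat unfolding CAT_minus1_def geodesic_space_def by blast
  define cxy where "cxy = (\<lambda>s. c1 (A - s))"
  have cxy: "geodesic_segment cxy x y"
    unfolding cxy_def A_def by (rule geodesic_segment_reverse[OF c1])
  define a b c where "a = H2_polar A 0" and "b = H2_polar 0 0" and "c = H2_polar B \<theta>"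
  have ab: "H2dist a b = dist x y"
    using pos by (simp add: a_def b_def A_def H2dist_H2_polar_same_angle dist_commute)
  have bc: "H2dist b c = dist y z"
    using pos
    by (simp add: b_def c_def B_def H2dist_H2_polar_same_angle H2_polar_0[of \<theta>, symmetric])
  have ca: "H2dist c a = dist z x"
    unfolding a_def c_def using \<theta>
    by (subst H2dist_H2_polar_eq[where r = C]) (simp_all add: C_def dist_commute mult.commute)
  define P where "P = comparison_pairs cxy x y a b \<union> comparison_pairs c2 y z b c
    \<union> comparison_pairs czx z x c a"
  have comparison: "\<forall>(p, pb)\<in>P. \<forall>(q, qb)\<in>P. dist p q \<le> H2dist pb qb"
    using cat cxy c2 czx ab bc ca unfolding CAT_minus1_def Let_def P_def a_def b_def c_def
    by (simp add: Im_H2_polar_pos)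
  have "(c1 r1, H2_polar r1 0) \<in> P"
    unfolding P_def comparison_pairs_def
    using r1 by (auto simp: cxy_def a_def b_def A_def H2dist_H2_polar_same_angle
        Im_H2_polar_pos dist_commute intro!: exI[of _ "A - r1"])
  moreover have "(c2 r2, H2_polar r2 \<theta>) \<in> P"
    unfolding P_def comparison_pairs_def
    using r2 by (auto simp: b_def c_def B_def H2dist_H2_polar_same_angle Im_H2_polar_pos
        H2_polar_0[of \<theta>, symmetric])
  ultimately have "dist (c1 r1) (c2 r2) \<le> H2dist (H2_polar r1 0) (H2_polar r2 \<theta>)"
    using comparison by fastforce
  then have "cosh (dist (c1 r1) (c2 r2)) \<le> cosh (H2dist (H2_polar r1 0) (H2_polar r2 \<theta>))"
    using cosh_real_nonneg_le_iff[OF zero_le_dist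
        H2dist_nonneg[OF Im_H2_polar_pos Im_H2_polar_pos]] by blast
  also have "\<dots> = cosh r1 * cosh r2 - sinh r1 * sinh r2 * cos \<theta>"
    by (simp add: cosh_H2dist_H2_polar)
  also have "\<dots> = cosh (r1 - r2)
      + sinh r1 * sinh r2 * (cosh C - cosh (A - B)) / (sinh A * sinh B)"
    using \<theta> pos by (simp add: A_def B_def C_def cosh_diff field_simps)
  finally show ?thesis
    by (simp add: A_def B_def C_def)
qed

lemma CAT_minus1_cosh_dist_le_reverse:
  fixes c1 c2 :: "real \<Rightarrow> 'a::metric_space"
  assumes cat: "CAT_minus1 TYPE('a)"
    and c1: "geodesic_segment c1 x y" and c2: "geodesic_segment c2 z y"
    and pos: "dist x y > 0" "dist z y > 0"
    and s: "0 \<le> s" "s \<le> dist x y" and t: "0 \<le> t" "t \<le> dist z y"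
  shows "cosh (dist (c1 s) (c2 t)) \<le> cosh ((dist x y - s) - (dist z y - t))
           + sinh (dist x y - s) * sinh (dist z y - t)
             * (cosh (dist x z) - cosh (dist x y - dist z y)) / (sinh (dist x y) * sinh (dist z y))"
  using CAT_minus1_cosh_dist_le[OF cat geodesic_segment_reverse[OF c1]
      geodesic_segment_reverse[OF c2], of "dist x y - s" "dist z y - t"] pos s t
  by (simp add: dist_commute)

lemma geodesic_ray_dist_0: "geodesic_ray g \<Longrightarrow> T \<ge> 0 \<Longrightarrow> dist (g 0) (g T) = T"
  unfolding geodesic_ray_def by force

lemma geodesic_ray_segment: "geodesic_ray g \<Longrightarrow> T \<ge> 0 \<Longrightarrow> geodesic_segment g (g 0) (g T)"
  unfolding geodesic_segment_def by (auto simp: geodesic_ray_dist_0 geodesic_ray_def)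

lemma antimono_on_tendsto_Inf:
  fixes f :: "real \<Rightarrow> real"
  assumes anti: "antimono_on {a..} f" and bdd: "bdd_below (f ` {a..})"
  shows "(f \<longlongrightarrow> Inf (f ` {a..})) at_top"
proof (rule decreasing_tendsto)
  show "\<forall>\<^sub>F x in at_top. Inf (f ` {a..}) \<le> f x"
    using bdd by (auto simp: eventually_at_top_linorder intro!: exI[of _ a] cInf_lower)
next
  fix y assume "Inf (f ` {a..}) < y"
  then obtain T where T: "T \<ge> a" "f T < y"
    using bdd by (subst (asm) cInf_less_iff) auto
  then have "f U < y" if "U \<ge> T" for U
    using anti that by (fastforce dest: monotone_onD[of _ _ _ f T U])
  then show "\<forall>\<^sub>F x in at_top. f x < y"
    by (auto simp: eventually_at_top_linorder)
qed

lemma busemann_geodesic_ray_tendsto: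
  assumes g: "geodesic_ray g"
  shows "((\<lambda>T. dist x (g T) - T) \<longlongrightarrow> busemann g (g 0) x) at_top"
proof -
  define f where "f T = dist x (g T) - T" for T
  have "antimono_on {0..} f"
  proof (rule monotone_onI)
    fix T T' :: real assume "T \<in> {0..}" "T' \<in> {0..}" "T \<le> T'"
    then have "dist (g T) (g T') = T' - T"
      using g unfolding geodesic_ray_def by auto
    then show "f T' \<le> f T"
      using dist_triangle[of x "g T'" "g T"] by (simp add: f_def dist_commute)
  qed
  moreover have "bdd_below (f ` {0..})"
  proof (rule bdd_belowI2)
    fix T :: real assume "T \<in> {0..}"
    then show "- dist x (g 0) \<le> f T"
      using dist_triangle[of "g 0" "g T" x] geodesic_ray_dist_0[OF g, of T]
      by (simp add: f_def dist_commute)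
  qed
  ultimately have lim: "(f \<longlongrightarrow> Inf (f ` {0..})) at_top"
    by (rule antimono_on_tendsto_Inf)
  have "\<forall>\<^sub>F T in at_top. f T = dist x (g T) - dist (g 0) (g T)"
    using geodesic_ray_dist_0[OF g]
    by (auto simp: f_def eventually_at_top_linorder intro!: exI[of _ 0])
  then have "busemann g (g 0) x = Inf (f ` {0..})"
    unfolding busemann_def using lim by (intro tendsto_Lim) (auto intro: tendsto_cong[THEN iffD1])
  then show ?thesis
    using lim by (simp add: f_def[abs_def])
qed

lemma filterlim_dist_geodesic_ray_at_top:
  assumes g: "geodesic_ray g"
  shows "filterlim (\<lambda>U. dist x (g U)) at_top at_top"
proof (rule filterlim_at_top_mono[OF filterlim_tendsto_add_at_top[OF
      tendsto_const[of "- dist (g 0) x"] filterlim_ident]])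
  have "- dist (g 0) x + U \<le> dist x (g U)" if "U \<ge> 0" for U
    using dist_triangle[of "g 0" "g U" x] geodesic_ray_dist_0[OF g that] by simp
  then show "\<forall>\<^sub>F U in at_top. - dist (g 0) x + U \<le> dist x (g U)"
    by (auto simp: eventually_at_top_linorder intro!: exI[of _ 0])
qed

lemma le_arcosh_if_cosh_le:
  fixes x y :: real
  assumes "0 \<le> x" "cosh x \<le> y"
  shows "x \<le> arcosh y"
  using assms arcosh_less_iff_real[of y "cosh x"] cosh_real_ge_1[of x]
  by (simp add: arcosh_cosh_real not_less[symmetric])

lemma chord_tendsto_asymptotic_ray:
  fixes g1 g2 :: "real \<Rightarrow> 'a::metric_space"
  assumes cat: "CAT_minus1 TYPE('a)"
    and g1: "geodesic_ray g1" and g2: "geodesic_ray g2" and asym: "same_endpoint g1 g2"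
    and \<sigma>: "\<And>U. geodesic_segment (\<sigma> U) (g2 0) (g1 U)" and t: "t \<ge> 0"
  shows "((\<lambda>U. dist (\<sigma> U t) (g2 t)) \<longlongrightarrow> 0) at_top"
proof -
  obtain M where M: "\<And>U. U \<ge> 0 \<Longrightarrow> dist (g1 U) (g2 U) \<le> M"
    using asym unfolding same_endpoint_def by blast
  define L where "L U = dist (g2 0) (g1 U)" for U
  have L: "filterlim L at_top at_top"
    unfolding L_def[abs_def] by (rule filterlim_dist_geodesic_ray_at_top[OF g1])
  define H where "H U = (sinh t)\<^sup>2 * cosh M / (sinh (L U) * sinh U)" for U
  have "filterlim (\<lambda>U. sinh (L U) * sinh U) at_top at_top"
    by (intro filterlim_at_top_mult_at_top filterlim_compose[OF sinh_real_at_top L] sinh_real_at_top)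
  then have H: "(H \<longlongrightarrow> 0) at_top"
    unfolding H_def by (intro tendsto_divide_0[OF tendsto_const] filterlim_at_top_imp_at_infinity)
  have far: "\<forall>\<^sub>F U in at_top. t < U \<and> t < L U"
    using L by (intro eventually_conj eventually_gt_at_top) (simp add: filterlim_at_top_dense)
  have bound: "\<forall>\<^sub>F U in at_top. dist (\<sigma> U t) (g2 t) \<le> arcosh (1 + H U) \<and> 0 \<le> H U"
    using far
  proof eventually_elim
    case (elim U)
    have dist_U: "dist (g2 0) (g2 U) = U"
      using elim t by (simp add: geodesic_ray_dist_0[OF g2])
    have "g2 0 \<noteq> g1 U"
      using elim t by (auto simp: L_def)
    have "cosh (dist (g1 U) (g2 U)) \<le> cosh M"
      using M[of U] elim t
      by (subst cosh_real_nonneg_le_iff) (auto intro: order_trans[OF zero_le_dist])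
    then have num_le: "cosh (dist (g1 U) (g2 U)) - cosh (L U - U) \<le> cosh M"
      using cosh_real_pos[of "L U - U"] by linarith
    have "cosh (dist (\<sigma> U t) (g2 t)) \<le> 1 + (sinh t)\<^sup>2
            * (cosh (dist (g1 U) (g2 U)) - cosh (L U - U)) / (sinh (L U) * sinh U)"
      using CAT_minus1_cosh_dist_le[OF cat \<sigma>[of U] geodesic_ray_segment[OF g2, of U], of t t]
        elim t dist_U \<open>g2 0 \<noteq> g1 U\<close>
      by (simp add: L_def power2_eq_square)
    also have "\<dots> \<le> 1 + H U"
      unfolding H_def using elim t num_le
      by (intro add_left_mono divide_right_mono mult_left_mono) auto
    finally show ?case
      using elim t by (auto simp: H_def intro!: le_arcosh_if_cosh_le)
  qed
  have "\<forall>\<^sub>F U in at_top. 1 \<le> 1 + H U"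
    using bound by (rule eventually_mono) simp
  then have "((\<lambda>U. arcosh (1 + H U)) \<longlongrightarrow> arcosh (1 + 0)) at_top"
    by (intro tendsto_arcosh_strong tendsto_add tendsto_const H) auto
  then have upper: "((\<lambda>U. arcosh (1 + H U)) \<longlongrightarrow> 0) at_top"
    by simp
  show ?thesis
  proof (rule tendsto_sandwich[OF _ _ tendsto_const upper])
    show "\<forall>\<^sub>F U in at_top. dist (\<sigma> U t) (g2 t) \<le> arcosh (1 + H U)"
      using bound by (rule eventually_mono) simp
  qed simp
qed

lemma sinh_diff_div_sinh_tendsto: "((\<lambda>x::real. sinh (x - c) / sinh x) \<longlongrightarrow> exp (- c)) at_top"
  by real_asymp (simp add: exp_minus inverse_eq_divide)

lemma far_comparison_bound_tendsto:
  fixes L :: "real \<Rightarrow> real"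
  assumes L: "((\<lambda>U. L U - U) \<longlongrightarrow> \<rho>) at_top"
  shows "((\<lambda>U. cosh ((U - s) - (L U - t)) + sinh (U - s) * sinh (L U - t)
              * (D - cosh (U - L U)) / (sinh U * sinh (L U)))
          \<longlongrightarrow> (D - cosh \<rho>) / exp (t + s) + cosh (\<rho> + s - t)) at_top"
proof -
  have "filterlim (\<lambda>U. (L U - U) + U) at_top at_top"
    by (rule filterlim_tendsto_add_at_top[OF L filterlim_ident])
  then have "((\<lambda>U. sinh (L U - t) / sinh (L U)) \<longlongrightarrow> exp (- t)) at_top"
    using filterlim_compose[OF sinh_diff_div_sinh_tendsto] by simp
  then have "((\<lambda>U. cosh ((t - s) - (L U - U))
              + sinh (U - s) / sinh U * (sinh (L U - t) / sinh (L U)) * (D - cosh (L U - U)))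
          \<longlongrightarrow> cosh ((t - s) - \<rho>) + exp (- s) * exp (- t) * (D - cosh \<rho>)) at_top"
    by (intro tendsto_intros L sinh_diff_div_sinh_tendsto)
  moreover have "(\<lambda>U. cosh ((U - s) - (L U - t)) + sinh (U - s) * sinh (L U - t)
              * (D - cosh (U - L U)) / (sinh U * sinh (L U)))
      = (\<lambda>U. cosh ((t - s) - (L U - U))
              + sinh (U - s) / sinh U * (sinh (L U - t) / sinh (L U)) * (D - cosh (L U - U)))"
    by (intro ext arg_cong2[where f = "(+)"] arg_cong[where f = cosh])
      (auto simp: cosh_minus[of "L _ - _", simplified])
  moreover have "cosh ((t - s) - \<rho>) + exp (- s) * exp (- t) * (D - cosh \<rho>)
      = (D - cosh \<rho>) / exp (t + s) + cosh (\<rho> + s - t)"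
    using cosh_minus[of "\<rho> + s - t"] by (simp add: exp_add exp_minus field_simps)
  ultimately show ?thesis
    by simp
qed

lemma asymptotic_rays_dist_le:
  fixes g1 g2 :: "real \<Rightarrow> 'a::metric_space"
  assumes cat: "CAT_minus1 TYPE('a)"
    and g1: "geodesic_ray g1" and g2: "geodesic_ray g2" and asym: "same_endpoint g1 g2"
    and s: "s \<ge> 0" and t: "t \<ge> 0"
  defines "d \<equiv> dist (g1 0) (g2 0)" and "\<rho> \<equiv> busemann g1 (g1 0) (g2 0)"
  shows "dist (g1 s) (g2 t) \<le> arcosh ((cosh d - cosh \<rho>) / exp (t + s) + cosh (\<rho> + s - t))"
proof -
  have "\<forall>U. \<exists>c. geodesic_segment c (g2 0) (g1 U)"
    using cat unfolding CAT_minus1_def geodesic_space_def by blast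
  then obtain \<sigma> where \<sigma>: "\<And>U. geodesic_segment (\<sigma> U) (g2 0) (g1 U)"
    by metis
  define L where "L U = dist (g2 0) (g1 U)" for U
  define E where "E U = cosh ((U - s) - (L U - t)) + sinh (U - s) * sinh (L U - t)
      * (cosh d - cosh (U - L U)) / (sinh U * sinh (L U))" for U
  define E_lim where "E_lim = (cosh d - cosh \<rho>) / exp (t + s) + cosh (\<rho> + s - t)"
  have "((\<lambda>U. L U - U) \<longlongrightarrow> \<rho>) at_top"
    using busemann_geodesic_ray_tendsto[OF g1, of "g2 0"] by (simp add: L_def \<rho>_def dist_commute)
  then have E: "(E \<longlongrightarrow> E_lim) at_top"
    unfolding E_def[abs_def] E_lim_def by (rule far_comparison_bound_tendsto)
  have "filterlim L at_top at_top"
    unfolding L_def[abs_def] by (rule filterlim_dist_geodesic_ray_at_top[OF g1])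
  then have far: "\<forall>\<^sub>F U in at_top. s < U \<and> t < L U"
    by (intro eventually_conj eventually_gt_at_top) (simp add: filterlim_at_top_dense)
  have bound: "\<forall>\<^sub>F U in at_top. cosh (dist (g1 s) (\<sigma> U t)) \<le> E U"
    using far
  proof eventually_elim
    case (elim U)
    have "g1 U \<noteq> g2 0"
      using elim t by (auto simp: L_def)
    then show ?case
      using CAT_minus1_cosh_dist_le_reverse[OF cat geodesic_ray_segment[OF g1, of U] \<sigma>[of U],
          of s t] elim s t geodesic_ray_dist_0[OF g1, of U]
      by (simp add: E_def L_def d_def dist_commute)
  qed
  then have E_ge_1: "\<forall>\<^sub>F U in at_top. 1 \<le> E U"
    by (rule eventually_mono) (rule order_trans[OF cosh_real_ge_1])
  then have "1 \<le> E_lim"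
    by (rule tendsto_lowerbound[OF E]) simp
  then have lim: "((\<lambda>U. arcosh (E U) + dist (\<sigma> U t) (g2 t)) \<longlongrightarrow> arcosh E_lim + 0) at_top"
    by (intro tendsto_add tendsto_arcosh_strong E E_ge_1
        chord_tendsto_asymptotic_ray[OF cat g1 g2 asym \<sigma> t])
  have "\<forall>\<^sub>F U in at_top. dist (g1 s) (g2 t) \<le> arcosh (E U) + dist (\<sigma> U t) (g2 t)"
    using bound
  proof eventually_elim
    case (elim U)
    then show ?case
      using dist_triangle[of "g1 s" "g2 t" "\<sigma> U t"] le_arcosh_if_cosh_le[OF zero_le_dist elim]
      by linarith
  qed
  then show ?thesis
    using tendsto_le[OF _ lim tendsto_const] by (simp add: E_lim_def)
qed

lemma arcosh_1_plus_2_square: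
  fixes x :: real
  assumes "x \<ge> 0"
  shows "arcosh (1 + 2 * x\<^sup>2) = 2 * arsinh x"
proof -
  have "cosh (2 * arsinh x) = 1 + 2 * x\<^sup>2"
    using cosh_double[of "arsinh x"] cosh_square_eq[of "arsinh x"] by simp
  moreover have "2 * arsinh x \<ge> 0"
    using assms arsinh_real_neg_iff[of x] by linarith
  ultimately show ?thesis
    by (metis arcosh_cosh_real)
qed

lemma sinh_ge_self:
  fixes y :: real
  assumes "y \<ge> 0"
  shows "y \<le> sinh y"
proof -
  have "sinh 0 - 0 \<le> sinh y - y"
  proof (rule DERIV_nonneg_imp_nondecreasing[OF assms])
    fix x :: real
    have "((\<lambda>z. sinh z - z) has_real_derivative cosh x - 1) (at x)"
      by (auto intro!: derivative_eq_intros)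
    then show "\<exists>D. ((\<lambda>z. sinh z - z) has_real_derivative D) (at x) \<and> 0 \<le> D"
      using cosh_real_ge_1[of x] by auto
  qed
  then show ?thesis
    by simp
qed

lemma arsinh_le_self:
  fixes x :: real
  assumes "x \<ge> 0"
  shows "arsinh x \<le> x"
proof -
  have "arsinh x \<ge> 0"
    using assms arsinh_real_neg_iff[of x] by linarith
  then show ?thesis
    using sinh_ge_self[of "arsinh x"] by simp
qed

lemma divide_sqrt_square_plus_1_mono:
  fixes a b :: real
  assumes "0 \<le> b" "b \<le> a"
  shows "b / sqrt (b\<^sup>2 + 1) \<le> a / sqrt (a\<^sup>2 + 1)"
proof -
  have "b\<^sup>2 * (a\<^sup>2 + 1) \<le> a\<^sup>2 * (b\<^sup>2 + 1)"
    using assms power_mono[of b a 2] by (simp add: algebra_simps)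
  then have "b * sqrt (a\<^sup>2 + 1) \<le> a * sqrt (b\<^sup>2 + 1)"
    using assms by (metis real_sqrt_le_iff real_sqrt_mult real_sqrt_abs abs_of_nonneg order_trans)
  moreover have "sqrt (a\<^sup>2 + 1) > 0" "sqrt (b\<^sup>2 + 1) > 0"
    by (simp_all add: add_nonneg_pos)
  ultimately show ?thesis
    by (simp add: divide_simps mult.commute)
qed

lemma convex_on_arsinh_exp:
  fixes k :: real
  assumes k: "k \<ge> 0"
  shows "convex_on UNIV (\<lambda>t. arsinh (k * exp (- t)))"
proof (rule convex_on_realI[where f' = "\<lambda>x. - (k * exp (- x) / sqrt ((k * exp (- x))\<^sup>2 + 1))"])
  fix x :: real
  show "((\<lambda>t. arsinh (k * exp (- t))) has_real_derivative
          - (k * exp (- x) / sqrt ((k * exp (- x))\<^sup>2 + 1))) (at x)"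
    by (rule DERIV_chain2[OF arsinh_real_has_field_derivative, THEN DERIV_cong])
      (auto intro!: derivative_eq_intros)
next
  fix x y :: real assume "x \<le> y"
  then show "- (k * exp (- x) / sqrt ((k * exp (- x))\<^sup>2 + 1))
        \<le> - (k * exp (- y) / sqrt ((k * exp (- y))\<^sup>2 + 1))"
    using k by (simp add: divide_sqrt_square_plus_1_mono mult_left_mono)
qed simp

lemma double_arsinh_exp_le:
  fixes d t :: real
  assumes d: "d > 0" and t: "t \<ge> 0"
  shows "2 * arsinh (sinh (d / 2) * exp (- t))
     \<le> (if t \<le> d / 2 then d - 2 / d * (exp (- d) + d - 1) * t else 2 * sinh (d / 2) * exp (- t))"
proof (cases "t \<le> d / 2")
  case False
  then show ?thesis
    using d arsinh_le_self[of "sinh (d / 2) * exp (- t)"] by simp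
next
  case True
  define f where "f t = arsinh (sinh (d / 2) * exp (- t))" for t
  define l where "l = 2 * t / d"
  have l: "0 \<le> l" "l \<le> 1" "(1 - l) *\<^sub>R 0 + l *\<^sub>R (d / 2) = t"
    using d t True by (auto simp: l_def field_simps)
  have "f (d / 2) \<le> sinh (d / 2) * exp (- (d / 2))"
    unfolding f_def using d by (intro arsinh_le_self) simp
  also have "\<dots> = (1 - exp (- d)) / 2"
    by (simp add: sinh_field_def field_simps flip: exp_add)
  finally have f_half: "2 * f (d / 2) \<le> 1 - exp (- d)"
    by simp
  have "f t \<le> (1 - l) * f 0 + l * f (d / 2)"
    using convex_onD[OF convex_on_arsinh_exp[of "sinh (d / 2)"], of l 0 "d / 2"] d l
    by (simp add: f_def)
  then have "2 * f t \<le> (1 - l) * (2 * f 0) + l * (2 * f (d / 2))"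
    by (simp add: algebra_simps)
  also have "\<dots> \<le> (1 - l) * d + l * (1 - exp (- d))"
    using l f_half by (simp add: f_def arsinh_sinh_real mult_left_mono)
  also have "\<dots> = d - 2 / d * (exp (- d) + d - 1) * t"
    using d by (simp add: l_def field_simps)
  finally show ?thesis
    using True by (simp add: f_def)
qed

theorem corollaryA2:
  fixes g1 g2 :: "real \<Rightarrow> 'a::metric_space"
  assumes "CAT_minus1 TYPE('a)"
    and "geodesic_ray g1" and "geodesic_ray g2"
    and "same_endpoint g1 g2"
  defines "d \<equiv> dist (g1 0) (g2 0)"
    and "\<rho> \<equiv> busemann g1 (g1 0) (g2 0)"
  shows "(\<forall>s\<ge>0. \<forall>t\<ge>0. dist (g1 s) (g2 t)
            \<le> arcosh ((cosh d - cosh \<rho>) / exp (t + s) + cosh (\<rho> + s - t)))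
       \<and> (\<rho> = 0 \<and> d > 0 \<longrightarrow>
            (\<forall>t\<ge>0. dist (g1 t) (g2 t) \<le> 2 * arsinh (sinh (d / 2) * exp (- t))
               \<and> 2 * arsinh (sinh (d / 2) * exp (- t))
                  \<le> (if t \<le> d / 2 then d - 2 / d * (exp (- d) + d - 1) * t
                     else 2 * sinh (d / 2) * exp (- t))))"
proof -
  have bound: "\<forall>s\<ge>0. \<forall>t\<ge>0. dist (g1 s) (g2 t)
      \<le> arcosh ((cosh d - cosh \<rho>) / exp (t + s) + cosh (\<rho> + s - t))"
    using asymptotic_rays_dist_le[OF assms(1-4)] unfolding d_def \<rho>_def by blast
  have "dist (g1 t) (g2 t) \<le> 2 * arsinh (sinh (d / 2) * exp (- t))"
    if "\<rho> = 0" "d > 0" "t \<ge> 0" for t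
  proof -
    have "cosh d = 1 + 2 * (sinh (d / 2))\<^sup>2"
      using cosh_double[of "d / 2"] cosh_square_eq[of "d / 2"] by simp
    then have arg: "(cosh d - cosh \<rho>) / exp (t + t) + cosh (\<rho> + t - t)
        = 1 + 2 * (sinh (d / 2) * exp (- t))\<^sup>2"
      using \<open>\<rho> = 0\<close> exp_add[of t t]
      by (simp add: power_mult_distrib exp_minus field_simps power2_eq_square)
    have "dist (g1 t) (g2 t) \<le> arcosh ((cosh d - cosh \<rho>) / exp (t + t) + cosh (\<rho> + t - t))"
      using bound \<open>t \<ge> 0\<close> by blast
    also have "\<dots> = 2 * arsinh (sinh (d / 2) * exp (- t))"
      unfolding arg using \<open>d > 0\<close> by (intro arcosh_1_plus_2_square) simp
    finally show ?thesis .
  qed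
  then show ?thesis
    using bound double_arsinh_exp_le by blast
qed

end
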